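(* Let $V$ be a finite set of nails, let $g_1, g_2$ be specifications on $V$, and let $h_1, h_2 \in F(V)$ be words with $h_1$ solving $g_1$ and $h_2$ solving $g_2$ (the supports of $h_1,h_2$ may overlap). Suppose that for every $S \subseteq V$ with $g_1(S) = g_2(S) = \mathsf{hang}$ there exists $S'$ with $S \subseteq S' \subseteq V$ and $g_1(S') \ne g_2(S')$. Then $h_1 + h_2$ solves $g_1 \wedge g_2$, and $[h_1,h_2] = h_1 + h_2 - h_1 - h_2$ solves $g_1 \vee g_2$. Moreover, the hypothesis holds automatically when $V = V_1 \sqcup V_2$ and $g_i(S) = f_i(S \cap V_i)$ for specifications $f_i$ on $V_i$ ($i=1,2$).
   Context: Words are elements of the free group $F(V)$ on a finite set $V$ of nails, written additively ($+$ group operation, $-$ inverse, $0$ identity). For $S \subseteq V$, $h|_S$ is the image of $h$ under the homomorphism killing the generators in $S$. A specification on $V$ is a monotone function $f: 2^V \to \{\mathsf{hang}, \mathsf{fall}\}$ with $f(V) = \mathsf{fall}$, where $\mathsf{hang} < \mathsf{fall}$ and monotone means $S \subseteq S' \Rightarrow f(S) \le f(S')$. A word $h$ solves $f$ if for every $S \subseteq V$: $h|_S = 0 \iff f(S) = \mathsf{fall}$. The operations $\vee$, $\wedge$ on specifications are pointwise $\max$, $\min$ with respect to $\mathsf{hang} < \mathsf{fall}$. *)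

theory Defs
  imports Main
begin

text \<open>A letter (True, v) is the generator v, (False, v) is its inverse.
  An element of F(V) is represented by any word over V; two words represent the
  same group element iff they have the same free reduction.\<close>

type_synonym 'a fword = "(bool \<times> 'a) list"

definition fg_inv_letter :: "bool \<times> 'a \<Rightarrow> bool \<times> 'a" where
  "fg_inv_letter x = (\<not> fst x, snd x)"

definition fg_reduce :: "'a fword \<Rightarrow> 'a fword" where
  "fg_reduce w = foldr (\<lambda>x acc. case acc of
       [] \<Rightarrow> [x]
     | y # ys \<Rightarrow> (if y = fg_inv_letter x then ys else x # acc)) w []"

definition fg_is_zero :: "'a fword \<Rightarrow> bool" where
  "fg_is_zero w \<longleftrightarrow> fg_reduce w = []"

definition fg_plus :: "'a fword \<Rightarrow> 'a fword \<Rightarrow> 'a fword" where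
  "fg_plus u w = u @ w"

definition fg_neg :: "'a fword \<Rightarrow> 'a fword" where
  "fg_neg w = rev (map fg_inv_letter w)"

definition fg_comm :: "'a fword \<Rightarrow> 'a fword \<Rightarrow> 'a fword" where
  "fg_comm u w = fg_plus (fg_plus (fg_plus u w) (fg_neg u)) (fg_neg w)"

text \<open>h|_S: image under the homomorphism killing the generators in S.\<close>
definition fg_kill :: "'a set \<Rightarrow> 'a fword \<Rightarrow> 'a fword" where
  "fg_kill S w = filter (\<lambda>x. snd x \<notin> S) w"

definition fg_word_on :: "'a set \<Rightarrow> 'a fword \<Rightarrow> bool" where
  "fg_word_on V w \<longleftrightarrow> snd ` set w \<subseteq> V"

datatype outcome = hang | fall

definition outcome_le :: "outcome \<Rightarrow> outcome \<Rightarrow> bool" where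
  "outcome_le x y \<longleftrightarrow> x = hang \<or> y = fall"

definition is_spec :: "'a set \<Rightarrow> ('a set \<Rightarrow> outcome) \<Rightarrow> bool" where
  "is_spec V f \<longleftrightarrow>
     (\<forall>S S'. S \<subseteq> S' \<and> S' \<subseteq> V \<longrightarrow> outcome_le (f S) (f S')) \<and> f V = fall"

text \<open>Pointwise max (\<or>) and min (\<and>) w.r.t. hang < fall.\<close>
definition spec_or :: "('a set \<Rightarrow> outcome) \<Rightarrow> ('a set \<Rightarrow> outcome) \<Rightarrow> 'a set \<Rightarrow> outcome" where
  "spec_or f g S = (if f S = fall \<or> g S = fall then fall else hang)"

definition spec_and :: "('a set \<Rightarrow> outcome) \<Rightarrow> ('a set \<Rightarrow> outcome) \<Rightarrow> 'a set \<Rightarrow> outcome" where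
  "spec_and f g S = (if f S = fall \<and> g S = fall then fall else hang)"

definition solves :: "'a set \<Rightarrow> 'a fword \<Rightarrow> ('a set \<Rightarrow> outcome) \<Rightarrow> bool" where
  "solves V h f \<longleftrightarrow> fg_word_on V h \<and>
     (\<forall>S. S \<subseteq> V \<longrightarrow> (fg_is_zero (fg_kill S h) \<longleftrightarrow> f S = fall))"

end

theory Submission
  imports Defs
begin

(* Killing generators is a homomorphism, so a relation h1|S + h2|S = 0 or [h1|S, h2|S] = 0
   persists to every S' containing S.  In the first case h1|S' = 0 iff h2|S' = 0 for all such S',
   so g1 and g2 agree above S, which the hypothesis forbids unless g1 S = g2 S = fall.
   In the second case h1|S and h2|S commute, and commuting elements of a free group are
   powers c^a, c^b of a common element.  If both are nonzero then a, b are nonzero, so by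
   torsion-freeness h1|S' = 0 iff c|S' = 0 iff h2|S' = 0, and again g1, g2 agree above S.
   The common root of two commuting reduced words x, y is found by induction on their length:
   either nothing cancels in xy (then xy = yx literally), or x or y may be replaced by the
   shorter reduced word of xy, or x and y are conjugates by the same letter. *)

lemma fg_inv_letter_inv [simp]: "fg_inv_letter (fg_inv_letter x) = x"
  by (simp add: fg_inv_letter_def)

lemma fg_inv_letter_neq [simp]: "fg_inv_letter x \<noteq> x" "x \<noteq> fg_inv_letter x"
  by (auto simp: fg_inv_letter_def prod_eq_iff)

lemma fg_inv_letter_eq_iff: "fg_inv_letter x = y \<longleftrightarrow> x = fg_inv_letter y"
  by (auto simp: fg_inv_letter_def)

lemma snd_fg_inv_letter [simp]: "snd (fg_inv_letter x) = snd x"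
  by (simp add: fg_inv_letter_def)

subsection \<open>Free reduction\<close>

definition fg_push :: "bool \<times> 'a \<Rightarrow> 'a fword \<Rightarrow> 'a fword" where
  "fg_push x r = (case r of [] \<Rightarrow> [x] | y # ys \<Rightarrow> (if y = fg_inv_letter x then ys else x # r))"

lemma fg_reduce_Nil [simp]: "fg_reduce [] = []"
  by (simp add: fg_reduce_def)

lemma fg_reduce_Cons: "fg_reduce (x # w) = fg_push x (fg_reduce w)"
  by (simp add: fg_reduce_def fg_push_def)

fun fg_reduced :: "'a fword \<Rightarrow> bool" where
  "fg_reduced (a # b # w) \<longleftrightarrow> b \<noteq> fg_inv_letter a \<and> fg_reduced (b # w)"
| "fg_reduced _ \<longleftrightarrow> True"

lemma fg_reduced_Cons:
  "fg_reduced (a # w) \<longleftrightarrow> fg_reduced w \<and> (w \<noteq> [] \<longrightarrow> hd w \<noteq> fg_inv_letter a)"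
  by (cases w) auto

lemma fg_reduced_append:
  "fg_reduced (u @ v) \<longleftrightarrow> fg_reduced u \<and> fg_reduced v \<and>
     (u \<noteq> [] \<longrightarrow> v \<noteq> [] \<longrightarrow> hd v \<noteq> fg_inv_letter (last u))"
  by (induction u) (auto simp: fg_reduced_Cons)

lemma fg_reduced_push: "fg_reduced r \<Longrightarrow> fg_reduced (fg_push x r)"
  by (cases r) (auto simp: fg_push_def fg_reduced_Cons)

lemma fg_reduced_reduce: "fg_reduced (fg_reduce w)"
  by (induction w) (auto simp: fg_reduce_Cons fg_reduced_push)

lemma fg_reduce_reduced: "fg_reduced w \<Longrightarrow> fg_reduce w = w"
  by (induction w) (auto simp: fg_reduce_Cons fg_reduced_Cons fg_push_def split: list.splits)

lemma fg_reduce_idem [simp]: "fg_reduce (fg_reduce w) = fg_reduce w"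
  by (simp add: fg_reduce_reduced fg_reduced_reduce)

lemma fg_reduce_append_reduce [simp]: "fg_reduce (u @ fg_reduce v) = fg_reduce (u @ v)"
  by (induction u) (auto simp: fg_reduce_Cons)

lemma fg_push_push_inv: "fg_reduced r \<Longrightarrow> fg_push x (fg_push (fg_inv_letter x) r) = r"
  by (cases r) (auto simp: fg_push_def fg_reduced_Cons split: list.split)

lemma fg_reduce_cancel [simp]: "fg_reduce (x # fg_inv_letter x # w) = fg_reduce w"
  by (simp add: fg_reduce_Cons fg_push_push_inv fg_reduced_reduce)

lemma fg_reduce_push_append:
  "fg_reduced r \<Longrightarrow> fg_reduce (fg_push a r @ v) = fg_reduce (a # r @ v)"
  by (cases r) (auto simp: fg_push_def)

lemma fg_reduce_reduce_append [simp]: "fg_reduce (fg_reduce u @ v) = fg_reduce (u @ v)"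
proof (induction u)
  case (Cons a u)
  have "fg_reduce (fg_reduce (a # u) @ v) = fg_reduce (a # fg_reduce u @ v)"
    by (simp add: fg_reduce_Cons fg_reduce_push_append fg_reduced_reduce)
  also have "\<dots> = fg_reduce (a # u @ v)"
    using Cons.IH by (simp add: fg_reduce_Cons)
  finally show ?case by simp
qed simp

abbreviation fg_equiv :: "'a fword \<Rightarrow> 'a fword \<Rightarrow> bool" (infix "\<approx>" 50) where
  "u \<approx> v \<equiv> fg_reduce u = fg_reduce v"

lemma fg_equiv_append: "u \<approx> u' \<Longrightarrow> v \<approx> v' \<Longrightarrow> u @ v \<approx> u' @ v'"
  by (metis fg_reduce_append_reduce fg_reduce_reduce_append)

lemma fg_reduce_cancel_mid: "fg_reduce (u @ a # fg_inv_letter a # w) = fg_reduce (u @ w)"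
  by (metis fg_reduce_append_reduce fg_reduce_cancel)

lemma fg_neg_Nil [simp]: "fg_neg [] = []"
  by (simp add: fg_neg_def)

lemma fg_neg_Cons [simp]: "fg_neg (a # w) = fg_neg w @ [fg_inv_letter a]"
  by (simp add: fg_neg_def)

lemma fg_neg_append [simp]: "fg_neg (u @ v) = fg_neg v @ fg_neg u"
  by (simp add: fg_neg_def)

lemma fg_neg_neg [simp]: "fg_neg (fg_neg w) = w"
  by (simp add: fg_neg_def rev_map comp_def)

lemma length_fg_neg [simp]: "length (fg_neg w) = length w"
  by (simp add: fg_neg_def)

lemma fg_neg_eq_Nil_iff [simp]: "fg_neg w = [] \<longleftrightarrow> w = []"
  by (simp add: fg_neg_def)

lemma hd_fg_neg: "w \<noteq> [] \<Longrightarrow> hd (fg_neg w) = fg_inv_letter (last w)"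
  by (simp add: fg_neg_def hd_rev last_map)

lemma fg_reduce_append_neg: "fg_reduce (u @ v @ fg_neg v @ w) = fg_reduce (u @ w)"
proof (induction v arbitrary: u w)
  case (Cons a v)
  have "fg_reduce (u @ (a # v) @ fg_neg (a # v) @ w)
      = fg_reduce ((u @ [a]) @ v @ fg_neg v @ fg_inv_letter a # w)"
    by simp
  also have "\<dots> = fg_reduce (u @ a # fg_inv_letter a # w)"
    using Cons.IH[of "u @ [a]"] by simp
  finally show ?case by (simp add: fg_reduce_cancel_mid)
qed simp

lemma fg_reduce_neg_append: "fg_reduce (u @ fg_neg v @ v @ w) = fg_reduce (u @ w)"
  using fg_reduce_append_neg[of u "fg_neg v" w] by simp

lemma fg_equiv_neg: "u \<approx> v \<Longrightarrow> fg_neg u \<approx> fg_neg v"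
  by (metis append_Nil append_Nil2 fg_reduce_append_neg fg_reduce_neg_append
      fg_reduce_append_reduce fg_reduce_reduce_append)

lemma fg_kill_Nil [simp]: "fg_kill T [] = []"
  by (simp add: fg_kill_def)

lemma fg_kill_append [simp]: "fg_kill T (u @ v) = fg_kill T u @ fg_kill T v"
  by (simp add: fg_kill_def)

lemma fg_kill_Cons: "fg_kill T (a # v) = (if snd a \<in> T then fg_kill T v else a # fg_kill T v)"
  by (simp add: fg_kill_def)

lemma fg_kill_neg [simp]: "fg_kill T (fg_neg w) = fg_neg (fg_kill T w)"
  by (induction w) (auto simp: fg_kill_Cons)

lemma fg_kill_kill: "fg_kill T (fg_kill S w) = fg_kill (S \<union> T) w"
  by (simp add: fg_kill_def conj_commute)

lemma fg_reduce_kill_push: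
  "fg_reduced r \<Longrightarrow> fg_reduce (fg_kill T (fg_push a r)) = fg_reduce (fg_kill T (a # r))"
  by (cases r) (auto simp: fg_push_def fg_kill_Cons)

lemma fg_reduce_kill_reduce [simp]: "fg_reduce (fg_kill T (fg_reduce w)) = fg_reduce (fg_kill T w)"
proof (induction w)
  case (Cons a w)
  have "fg_reduce (fg_kill T (fg_reduce (a # w))) = fg_reduce (fg_kill T (a # fg_reduce w))"
    by (simp add: fg_reduce_Cons fg_reduce_kill_push fg_reduced_reduce)
  also have "\<dots> = fg_reduce (fg_kill T (a # w))"
    using Cons.IH by (simp add: fg_kill_Cons fg_reduce_Cons)
  finally show ?case .
qed simp

lemma fg_equiv_kill: "u \<approx> v \<Longrightarrow> fg_kill T u \<approx> fg_kill T v"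
  by (metis fg_reduce_kill_reduce)

lemma fg_is_zero_append: "fg_is_zero x \<Longrightarrow> fg_is_zero y \<Longrightarrow> fg_is_zero (x @ y)"
  by (metis fg_is_zero_def fg_reduce_reduce_append append_Nil)

lemma fg_is_zero_neg: "fg_is_zero w \<Longrightarrow> fg_is_zero (fg_neg w)"
  using fg_equiv_neg[of w "[]"] by (simp add: fg_is_zero_def)

lemma fg_is_zero_append_iff:
  assumes "fg_is_zero (x @ y)"
  shows "fg_is_zero x \<longleftrightarrow> fg_is_zero y"
proof
  show "fg_is_zero y" if "fg_is_zero x"
    using assms that fg_reduce_reduce_append[of x y] by (simp add: fg_is_zero_def)
  show "fg_is_zero x" if "fg_is_zero y"
  proof -
    have "fg_reduce x = fg_reduce (fg_reduce (x @ y) @ fg_neg y)"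
      using fg_reduce_append_neg[of x y "[]"] by simp
    then show ?thesis
      using assms fg_is_zero_neg[OF that] unfolding fg_is_zero_def by (simp only: append_Nil)
  qed
qed

lemma fg_is_zero_kill: "fg_is_zero w \<Longrightarrow> fg_is_zero (fg_kill T w)"
  by (metis fg_is_zero_def fg_reduce_kill_reduce fg_kill_Nil fg_reduce_Nil)

lemma fg_comm_eq: "fg_comm x y = x @ y @ fg_neg x @ fg_neg y"
  by (simp add: fg_comm_def fg_plus_def)

lemma fg_kill_comm: "fg_kill T (fg_comm x y) = fg_comm (fg_kill T x) (fg_kill T y)"
  by (simp add: fg_comm_eq)

lemma fg_is_zero_comm:
  assumes "fg_is_zero x \<or> fg_is_zero y"
  shows "fg_is_zero (fg_comm x y)"
  using assms
proof
  assume "fg_is_zero x"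
  then have "x @ y @ fg_neg x @ fg_neg y \<approx> [] @ y @ [] @ fg_neg y"
    using fg_is_zero_neg[of x] by (intro fg_equiv_append refl) (simp_all add: fg_is_zero_def)
  then show ?thesis
    using fg_reduce_append_neg[of "[]" y "[]"] by (simp add: fg_is_zero_def fg_comm_eq)
next
  assume "fg_is_zero y"
  then have "x @ y @ fg_neg x @ fg_neg y \<approx> x @ [] @ fg_neg x @ []"
    using fg_is_zero_neg[of y] by (intro fg_equiv_append refl) (simp_all add: fg_is_zero_def)
  then show ?thesis
    using fg_reduce_append_neg[of "[]" x "[]"] by (simp add: fg_is_zero_def fg_comm_eq)
qed

lemma fg_commute_if_comm_zero:
  assumes "fg_is_zero (fg_comm x y)"
  shows "x @ y \<approx> y @ x"
proof -
  have "fg_reduce (x @ y) = fg_reduce ((x @ y @ fg_neg x) @ fg_neg y @ y @ x)"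
    using fg_reduce_neg_append[of "x @ y @ fg_neg x" y x] fg_reduce_neg_append[of "x @ y" x "[]"]
    by simp
  also have "\<dots> = fg_reduce (fg_reduce (fg_comm x y) @ y @ x)"
    by (simp add: fg_comm_eq)
  also have "\<dots> = fg_reduce (y @ x)"
    using assms by (simp only: fg_is_zero_def append_Nil)
  finally show ?thesis .
qed

definition fg_pow :: "'a fword \<Rightarrow> nat \<Rightarrow> 'a fword" where
  "fg_pow c n = concat (replicate n c)"

definition fg_zpow :: "'a fword \<Rightarrow> int \<Rightarrow> 'a fword" where
  "fg_zpow c i = (if 0 \<le> i then fg_pow c (nat i) else fg_pow (fg_neg c) (nat (- i)))"

lemma fg_pow_0 [simp]: "fg_pow c 0 = []"
  by (simp add: fg_pow_def)

lemma fg_pow_Suc [simp]: "fg_pow c (Suc n) = c @ fg_pow c n"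
  by (simp add: fg_pow_def)

lemma fg_pow_add: "fg_pow c (m + n) = fg_pow c m @ fg_pow c n"
  by (simp add: fg_pow_def replicate_add)

lemma fg_pow_Nil [simp]: "fg_pow [] n = []"
  by (simp add: fg_pow_def)

lemma fg_neg_pow: "fg_neg (fg_pow c n) = fg_pow (fg_neg c) n"
proof (induction n)
  case (Suc n)
  then show ?case
    using fg_pow_add[of "fg_neg c" n 1] by simp
qed simp

lemma fg_kill_pow: "fg_kill T (fg_pow c n) = fg_pow (fg_kill T c) n"
  by (induction n) simp_all

lemma fg_kill_zpow: "fg_kill T (fg_zpow c i) = fg_zpow (fg_kill T c) i"
  by (simp add: fg_zpow_def fg_kill_pow)

lemma fg_neg_zpow: "fg_neg (fg_zpow c i) = fg_zpow c (- i)"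
  by (auto simp: fg_zpow_def fg_neg_pow)

lemma fg_reduce_pow_append_neg_pow:
  "fg_reduce (fg_pow c m @ fg_pow (fg_neg c) n) = fg_reduce (fg_zpow c (int m - int n))"
proof (cases "n \<le> m")
  case True
  then have "fg_pow c m = fg_pow c (m - n) @ fg_pow c n"
    by (metis le_add_diff_inverse2 fg_pow_add)
  moreover have "nat (int m - int n) = m - n"
    using True by simp
  ultimately show ?thesis
    using True fg_reduce_append_neg[of "fg_pow c (m - n)" "fg_pow c n" "[]"]
    by (simp add: fg_neg_pow fg_zpow_def)
next
  case False
  then have "fg_pow (fg_neg c) n = fg_pow (fg_neg c) m @ fg_pow (fg_neg c) (n - m)"
    by (metis le_add_diff_inverse nat_le_linear fg_pow_add)
  then show ?thesis
    using False fg_reduce_append_neg[of "[]" "fg_pow c m" "fg_pow (fg_neg c) (n - m)"]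
    by (simp add: fg_neg_pow fg_zpow_def nat_diff_distrib)
qed

lemma fg_zpow_add: "fg_zpow c i @ fg_zpow c j \<approx> fg_zpow c (i + j)"
proof -
  consider "0 \<le> i" "0 \<le> j" | "0 \<le> i" "j < 0" | "i < 0" "0 \<le> j" | "i < 0" "j < 0"
    by linarith
  then show ?thesis
  proof cases
    case 1
    then show ?thesis by (simp add: fg_zpow_def fg_pow_add[symmetric] nat_add_distrib)
  next
    case 2
    then show ?thesis
      using fg_reduce_pow_append_neg_pow[of c "nat i" "nat (- j)"] by (simp add: fg_zpow_def)
  next
    case 3
    then show ?thesis
      using fg_reduce_pow_append_neg_pow[of "fg_neg c" "nat (- i)" "nat j"]
      by (simp add: fg_zpow_def add.commute)
  next
    case 4
    then have "nat (- i) + nat (- j) = nat (- (i + j))" by simp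
    with 4 show ?thesis by (simp add: fg_zpow_def fg_pow_add[symmetric])
  qed
qed

lemma fg_equiv_pow: "c \<approx> d \<Longrightarrow> fg_pow c n \<approx> fg_pow d n"
  by (induction n) (use fg_equiv_append in auto)

lemma fg_equiv_zpow:
  assumes "c \<approx> d"
  shows "fg_zpow c i \<approx> fg_zpow d i"
  using fg_equiv_pow[OF assms] fg_equiv_pow[OF fg_equiv_neg[OF assms]] by (simp add: fg_zpow_def)

definition fg_conj :: "bool \<times> 'a \<Rightarrow> 'a fword \<Rightarrow> 'a fword" where
  "fg_conj a w = a # w @ [fg_inv_letter a]"

lemma fg_equiv_conj_iff: "fg_conj a u \<approx> fg_conj a v \<longleftrightarrow> u \<approx> v"
proof
  have unconj: "fg_reduce (fg_inv_letter a # fg_conj a w @ [a]) = fg_reduce w" for w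
    using fg_reduce_cancel[of "fg_inv_letter a"] fg_reduce_cancel_mid[of w "fg_inv_letter a" "[]"]
    by (simp add: fg_conj_def)
  show "u \<approx> v" if "fg_conj a u \<approx> fg_conj a v"
  proof -
    have "fg_inv_letter a # fg_conj a u @ [a] \<approx> fg_inv_letter a # fg_conj a v @ [a]"
      using fg_equiv_append[OF fg_equiv_append[OF refl that] refl, of "[fg_inv_letter a]" "[a]"]
      by simp
    then show ?thesis
      by (simp only: unconj)
  qed
next
  show "fg_conj a u \<approx> fg_conj a v" if "u \<approx> v"
    using fg_equiv_append[of "[a]" "[a]" "u @ [fg_inv_letter a]" "v @ [fg_inv_letter a]"]
      fg_equiv_append[OF that, of "[fg_inv_letter a]" "[fg_inv_letter a]"]
    by (simp add: fg_conj_def)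
qed

lemma fg_conj_append: "fg_conj a u @ fg_conj a v \<approx> fg_conj a (u @ v)"
  using fg_reduce_cancel_mid[of "a # u" "fg_inv_letter a" "v @ [fg_inv_letter a]"]
  by (simp add: fg_conj_def)

lemma fg_neg_conj: "fg_neg (fg_conj a w) = fg_conj a (fg_neg w)"
  by (simp add: fg_conj_def)

lemma fg_conj_pow: "fg_pow (fg_conj a c) n \<approx> fg_conj a (fg_pow c n)"
proof (induction n)
  case 0
  then show ?case by (simp add: fg_conj_def)
next
  case (Suc n)
  then have "fg_pow (fg_conj a c) (Suc n) \<approx> fg_conj a c @ fg_conj a (fg_pow c n)"
    using fg_equiv_append[OF refl Suc.IH] by simp
  also have "\<dots> = fg_reduce (fg_conj a (fg_pow c (Suc n)))"
    using fg_conj_append by simp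
  finally show ?case .
qed

lemma fg_conj_zpow: "fg_zpow (fg_conj a c) i \<approx> fg_conj a (fg_zpow c i)"
  by (simp add: fg_zpow_def fg_neg_conj fg_conj_pow)

lemma fg_reduced_conj: "fg_reduced (fg_conj a w) \<Longrightarrow> fg_reduced w"
  by (simp add: fg_conj_def fg_reduced_append fg_reduced_Cons)

lemma fg_conj_hd_butlast_tl:
  assumes "2 \<le> length w" "last w = fg_inv_letter (hd w)"
  shows "w = fg_conj (hd w) (butlast (tl w))"
proof -
  obtain b u where w: "w = b # u" and "u \<noteq> []"
    using assms(1) by (cases w) (auto simp: Suc_le_eq)
  then have "u = butlast u @ [fg_inv_letter b]"
    using assms(2) w by (metis append_butlast_last_id last_ConsR list.sel(1))
  then show ?thesis
    using w by (simp add: fg_conj_def)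
qed

subsection \<open>Torsion-freeness\<close>

lemma fg_reduced_pow:
  assumes "fg_reduced d" "d \<noteq> []" "hd d \<noteq> fg_inv_letter (last d)"
  shows "fg_reduced (fg_pow d n)"
proof (induction n)
  case (Suc n)
  then show ?case
    using assms by (cases n) (auto simp: fg_reduced_append hd_append fg_inv_letter_eq_iff)
qed simp

(* Either d is cyclically reduced, so that its powers are reduced, or d = a d' a^-1 with d' shorter. *)
lemma fg_pow_zero_imp_Nil:
  "fg_reduced d \<Longrightarrow> 0 < n \<Longrightarrow> fg_reduce (fg_pow d n) = [] \<Longrightarrow> d = []"
proof (induction "length d" arbitrary: d rule: less_induct)
  case less
  show ?case
  proof (rule ccontr)
    assume "d \<noteq> []"
    show False
    proof (cases "hd d = fg_inv_letter (last d)")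
      case False
      have "fg_pow d n \<noteq> []"
        using \<open>d \<noteq> []\<close> \<open>0 < n\<close> by (cases n) auto
      then show False
        using less.prems fg_reduce_reduced[OF fg_reduced_pow[OF less.prems(1) \<open>d \<noteq> []\<close> False]]
        by simp
    next
      case True
      have "2 \<le> length d"
        using True \<open>d \<noteq> []\<close> by (cases d; cases "tl d") auto
      then obtain a d' where d: "d = fg_conj a d'"
        using True fg_conj_hd_butlast_tl[of d] by (metis fg_inv_letter_eq_iff)
      have "fg_conj a (fg_pow d' n) \<approx> fg_conj a []"
        using fg_conj_pow[of a d' n] less.prems(3) d by (simp add: fg_conj_def[of a "[]"])
      then have "fg_pow d' n \<approx> []"
        by (simp only: fg_equiv_conj_iff)
      moreover have "length d' < length d" "fg_reduced d'"
        using d less.prems(1) fg_reduced_conj by (simp_all add: fg_conj_def)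
      ultimately have "d' = []"
        using less.hyps less.prems(2) by simp
      then show False
        using less.prems(1) d by (simp add: fg_conj_def)
    qed
  qed
qed

lemma fg_zpow_zero_iff: "i \<noteq> 0 \<Longrightarrow> fg_is_zero (fg_zpow c i) \<longleftrightarrow> fg_is_zero c"
proof
  assume "i \<noteq> 0" "fg_is_zero (fg_zpow c i)"
  show "fg_is_zero c"
  proof (cases "0 < i")
    case True
    then have "fg_reduce (fg_pow (fg_reduce c) (nat i)) = []"
      using \<open>fg_is_zero (fg_zpow c i)\<close> fg_equiv_pow[of "fg_reduce c" c "nat i"]
      by (simp add: fg_is_zero_def fg_zpow_def)
    then show ?thesis
      using True fg_pow_zero_imp_Nil[OF fg_reduced_reduce, of "nat i" c] by (simp add: fg_is_zero_def)
  next
    case False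
    then have "fg_reduce (fg_pow (fg_reduce (fg_neg c)) (nat (- i))) = []"
      using \<open>i \<noteq> 0\<close> \<open>fg_is_zero (fg_zpow c i)\<close> fg_equiv_pow[of "fg_reduce (fg_neg c)" "fg_neg c"]
      by (simp add: fg_is_zero_def fg_zpow_def)
    then have "fg_is_zero (fg_neg c)"
      using False \<open>i \<noteq> 0\<close> fg_pow_zero_imp_Nil[OF fg_reduced_reduce, of "nat (- i)" "fg_neg c"]
      by (simp add: fg_is_zero_def)
    then show ?thesis
      using fg_is_zero_neg by fastforce
  qed
next
  assume "fg_is_zero c"
  then show "fg_is_zero (fg_zpow c i)"
    using fg_equiv_zpow[of c "[]" i] by (simp add: fg_is_zero_def fg_zpow_def)
qed

subsection \<open>Commuting words\<close>

lemma fg_reduce_append_decomp: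
  assumes "fg_reduced x" "fg_reduced y"
  shows "\<exists>p s q. x = p @ s \<and> y = fg_neg s @ q \<and> fg_reduce (x @ y) = p @ q"
  using assms(1)
proof (induction x)
  case Nil
  then show ?case
    using fg_reduce_reduced[OF assms(2)] by auto
next
  case (Cons a x)
  then have "fg_reduced x" and hd_x: "x \<noteq> [] \<Longrightarrow> hd x \<noteq> fg_inv_letter a"
    by (auto simp: fg_reduced_Cons)
  then obtain p s q where d: "x = p @ s" "y = fg_neg s @ q" "fg_reduce (x @ y) = p @ q"
    using Cons.IH by auto
  have red: "fg_reduce ((a # x) @ y) = fg_push a (p @ q)"
    using d by (simp add: fg_reduce_Cons)
  show ?case
  proof (cases p)
    case (Cons b p')
    then have "b \<noteq> fg_inv_letter a"
      using hd_x d by auto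
    then have "a # x = (a # p) @ s" "fg_reduce ((a # x) @ y) = (a # p) @ q"
      using red d Cons by (simp_all add: fg_push_def)
    then show ?thesis
      using d(2) by blast
  next
    case Nil
    show ?thesis
    proof (cases "\<exists>q'. q = fg_inv_letter a # q'")
      case True
      then obtain q' where "q = fg_inv_letter a # q'" ..
      then have "a # x = [] @ (a # s)" "y = fg_neg (a # s) @ q'" "fg_reduce ((a # x) @ y) = [] @ q'"
        using red d Nil by (simp_all add: fg_push_def)
      then show ?thesis
        by blast
    next
      case False
      then have "fg_push a q = a # q"
        by (cases q) (auto simp: fg_push_def)
      then have "a # x = [a] @ s" "fg_reduce ((a # x) @ y) = [a] @ q"
        using red d Nil by simp_all
      then show ?thesis
        using d(2) by blast
    qed
  qed
qed

(* The hypotheses record the cancellations in xy (of s against s^-1) and in yx (of t against t^-1),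
   which leave the same reduced word.  When xy cancels without absorbing x or y, this forces
   x and y to begin with the same letter a and to end with a^-1. *)

lemma fg_conj_of_two_cancellations:
  assumes "x = p @ s" "y = fg_neg s @ q" "y = p' @ t" "x = fg_neg t @ q'"
    and "p @ q = p' @ q'" and "p \<noteq> []" "s \<noteq> []" "q \<noteq> []"
  shows "\<exists>a x' y'. x = fg_conj a x' \<and> y = fg_conj a y'"
proof -
  have "length (p @ q) = length (p' @ q')"
    using assms(5) by simp
  then have "length p' = length q" "length q' = length p"
    using arg_cong[OF assms(1), of length] arg_cong[OF assms(2), of length]
      arg_cong[OF assms(3), of length] arg_cong[OF assms(4), of length]
    by auto
  then have "p' \<noteq> []" "q' \<noteq> []"
    using assms(6,8) by auto
  define a where "a = hd x"
  have "hd y = a"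
    using assms(1,3,5,6) \<open>p' \<noteq> []\<close> unfolding a_def by (metis hd_append2)
  have "last y = last x"
    using assms(2,4,5,8) \<open>q' \<noteq> []\<close> by (metis last_appendR)
  have "hd y = fg_inv_letter (last x)"
    using assms(1,2,7) by (simp add: hd_fg_neg)
  then have "last x = fg_inv_letter a"
    using \<open>hd y = a\<close> by (simp add: fg_inv_letter_eq_iff)
  have "2 \<le> length x" "2 \<le> length y"
    using assms(1,2,6,7,8) by (auto simp: Suc_le_eq numeral_2_eq_2 length_greater_0_conv[symmetric]
        simp del: length_greater_0_conv)
  then have "x = fg_conj a (butlast (tl x))" "y = fg_conj a (butlast (tl y))"
    using fg_conj_hd_butlast_tl \<open>last x = fg_inv_letter a\<close> \<open>last y = last x\<close> \<open>hd y = a\<close>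
    by (metis a_def)+
  then show ?thesis
    by blast
qed

lemma fg_commute_reduce_left: "x @ y \<approx> y @ x \<Longrightarrow> x @ fg_reduce (x @ y) \<approx> fg_reduce (x @ y) @ x"
  by (metis append_assoc fg_reduce_append_reduce fg_reduce_reduce_append)

lemma fg_commute_reduce_right: "x @ y \<approx> y @ x \<Longrightarrow> fg_reduce (x @ y) @ y \<approx> y @ fg_reduce (x @ y)"
  by (metis append_assoc fg_reduce_append_reduce fg_reduce_reduce_append)

lemma fg_zpow_cancel_left:
  assumes "x \<approx> fg_zpow c a" "x @ y \<approx> fg_zpow c b"
  shows "y \<approx> fg_zpow c (b - a)"
proof -
  have "fg_reduce y = fg_reduce (fg_neg x @ x @ y)"
    using fg_reduce_neg_append[of "[]" x y] by simp
  also have "\<dots> = fg_reduce (fg_neg (fg_zpow c a) @ fg_zpow c b)"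
    using fg_equiv_append[OF fg_equiv_neg[OF assms(1)] assms(2)] .
  also have "\<dots> = fg_reduce (fg_zpow c (b - a))"
    using fg_zpow_add[of c "- a" b] by (simp add: fg_neg_zpow)
  finally show ?thesis .
qed

lemma fg_zpow_cancel_right:
  assumes "y \<approx> fg_zpow c b" "x @ y \<approx> fg_zpow c a"
  shows "x \<approx> fg_zpow c (a - b)"
proof -
  have "fg_reduce x = fg_reduce ((x @ y) @ fg_neg y)"
    using fg_reduce_append_neg[of x y "[]"] by simp
  also have "\<dots> = fg_reduce (fg_zpow c a @ fg_neg (fg_zpow c b))"
    using fg_equiv_append[OF assms(2) fg_equiv_neg[OF assms(1)]] .
  also have "\<dots> = fg_reduce (fg_zpow c (a - b))"
    using fg_zpow_add[of c a "- b"] by (simp add: fg_neg_zpow)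
  finally show ?thesis .
qed

lemma fg_zpow_root_if_append_commute:
  assumes "x @ y = y @ x"
  shows "\<exists>w a b. x = fg_zpow w a \<and> y = fg_zpow w b"
proof -
  obtain m n w where "concat (replicate m w) = x" "concat (replicate n w) = y"
    using comm_append_are_replicate[OF assms] by blast
  then have "x = fg_zpow w (int m)" "y = fg_zpow w (int n)"
    by (simp_all add: fg_zpow_def fg_pow_def)
  then show ?thesis
    by blast
qed

lemma fg_commute_reduced_root:
  assumes "fg_reduced x" "fg_reduced y" "x @ y \<approx> y @ x"
  shows "\<exists>c a b. x \<approx> fg_zpow c a \<and> y \<approx> fg_zpow c b"
  using assms
proof (induction "length x + length y" arbitrary: x y rule: less_induct)
  case less
  obtain p s q where d: "x = p @ s" "y = fg_neg s @ q" "fg_reduce (x @ y) = p @ q"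
    using fg_reduce_append_decomp[OF less.prems(1,2)] by blast
  obtain p' t q' where d': "y = p' @ t" "x = fg_neg t @ q'" "fg_reduce (y @ x) = p' @ q'"
    using fg_reduce_append_decomp[OF less.prems(2,1)] by blast
  have pq: "p @ q = p' @ q'"
    using d d' less.prems(3) by simp
  define z where "z = fg_reduce (x @ y)"
  have "fg_reduced z"
    by (simp add: z_def fg_reduced_reduce)
  consider (no_cancellation) "s = []" | (absorb_left) "s \<noteq> []" "p = []"
    | (absorb_right) "s \<noteq> []" "q = []" | (conjugate) "p \<noteq> []" "s \<noteq> []" "q \<noteq> []"
    by blast
  then show ?case
  proof cases
    case no_cancellation
    have "length t = length s"
      using arg_cong[OF pq, of length] arg_cong[OF d(1), of length] arg_cong[OF d(2), of length]
        arg_cong[OF d'(1), of length] arg_cong[OF d'(2), of length] by simp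
    then have "x @ y = y @ x"
      using no_cancellation d d' less.prems(3) by simp
    then show ?thesis
      using fg_zpow_root_if_append_commute by blast
  next
    case absorb_left
    then have "length x + length z < length x + length y"
      using d by (simp add: z_def)
    then obtain c a b where "x \<approx> fg_zpow c a" "z \<approx> fg_zpow c b"
      using less.hyps less.prems(1) \<open>fg_reduced z\<close> fg_commute_reduce_left[OF less.prems(3)]
      unfolding z_def by blast
    then show ?thesis
      using fg_zpow_cancel_left[of x c a y b] by (auto simp: z_def)
  next
    case absorb_right
    then have "length z + length y < length x + length y"
      using d by (simp add: z_def)
    then obtain c a b where "z \<approx> fg_zpow c a" "y \<approx> fg_zpow c b"
      using less.hyps less.prems(2) \<open>fg_reduced z\<close> fg_commute_reduce_right[OF less.prems(3)]
      unfolding z_def by blast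
    then show ?thesis
      using fg_zpow_cancel_right[of y c b x a] by (auto simp: z_def)
  next
    case conjugate
    then obtain a x' y' where x: "x = fg_conj a x'" and y: "y = fg_conj a y'"
      using fg_conj_of_two_cancellations[OF d(1,2) d'(1,2) pq] by blast
    have "fg_conj a (x' @ y') \<approx> fg_conj a (y' @ x')"
      using less.prems(3) fg_conj_append[of a x' y'] fg_conj_append[of a y' x'] x y by simp
    then have "x' @ y' \<approx> y' @ x'"
      by (simp only: fg_equiv_conj_iff)
    moreover have "length x' + length y' < length x + length y"
      using x y by (simp add: fg_conj_def)
    ultimately obtain c i j where "x' \<approx> fg_zpow c i" "y' \<approx> fg_zpow c j"
      using less.hyps less.prems(1,2) fg_reduced_conj x y by blast
    then have "x \<approx> fg_zpow (fg_conj a c) i" "y \<approx> fg_zpow (fg_conj a c) j"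
      using x y fg_conj_zpow fg_equiv_conj_iff by metis+
    then show ?thesis
      by blast
  qed
qed

lemma fg_commute_kill_zero_iff:
  assumes "x @ y \<approx> y @ x" "\<not> fg_is_zero x" "\<not> fg_is_zero y"
  shows "fg_is_zero (fg_kill T x) \<longleftrightarrow> fg_is_zero (fg_kill T y)"
proof -
  obtain c a b where x: "x \<approx> fg_zpow c a" and y: "y \<approx> fg_zpow c b"
    using fg_commute_reduced_root[of "fg_reduce x" "fg_reduce y"] assms(1)
    by (auto simp: fg_reduced_reduce)
  have "a \<noteq> 0" "b \<noteq> 0"
    using x y assms(2,3) by (auto simp: fg_is_zero_def fg_zpow_def)
  have "fg_is_zero (fg_kill T x) \<longleftrightarrow> fg_is_zero (fg_kill T c)"
    using fg_equiv_kill[OF x, of T] fg_zpow_zero_iff[OF \<open>a \<noteq> 0\<close>, of "fg_kill T c"]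
    by (simp add: fg_is_zero_def fg_kill_zpow)
  also have "\<dots> \<longleftrightarrow> fg_is_zero (fg_kill T y)"
    using fg_equiv_kill[OF y, of T] fg_zpow_zero_iff[OF \<open>b \<noteq> 0\<close>, of "fg_kill T c"]
    by (simp add: fg_is_zero_def fg_kill_zpow)
  finally show ?thesis .
qed

subsection \<open>Combining solutions\<close>

definition hang_separated :: "'a set \<Rightarrow> ('a set \<Rightarrow> outcome) \<Rightarrow> ('a set \<Rightarrow> outcome) \<Rightarrow> bool" where
  "hang_separated V g1 g2 \<longleftrightarrow>
     (\<forall>S. S \<subseteq> V \<and> g1 S = hang \<and> g2 S = hang \<longrightarrow> (\<exists>S'. S \<subseteq> S' \<and> S' \<subseteq> V \<and> g1 S' \<noteq> g2 S'))"

lemma outcome_neq_fall_iff [simp]: "x \<noteq> fall \<longleftrightarrow> x = hang"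
  by (cases x) simp_all

lemma solves_zero_iff: "solves V h g \<Longrightarrow> S \<subseteq> V \<Longrightarrow> fg_is_zero (fg_kill S h) \<longleftrightarrow> g S = fall"
  by (simp add: solves_def)

lemma fg_word_on_neg: "fg_word_on V w \<Longrightarrow> fg_word_on V (fg_neg w)"
  by (auto simp: fg_word_on_def fg_neg_def)

lemma solves_spec_and:
  assumes h1: "solves V h1 g1" and h2: "solves V h2 g2" and sep: "hang_separated V g1 g2"
  shows "solves V (fg_plus h1 h2) (spec_and g1 g2)"
proof -
  have "fg_is_zero (fg_kill S (h1 @ h2)) \<longleftrightarrow> g1 S = fall \<and> g2 S = fall" if "S \<subseteq> V" for S
  proof
    assume zero: "fg_is_zero (fg_kill S (h1 @ h2))"
    have agree: "g1 S' = g2 S'" if "S \<subseteq> S'" "S' \<subseteq> V" for S'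
    proof -
      have "fg_is_zero (fg_kill S' h1 @ fg_kill S' h2)"
        using fg_is_zero_kill[OF zero, of S'] \<open>S \<subseteq> S'\<close> by (simp add: fg_kill_kill Un_absorb1)
      then show ?thesis
        using fg_is_zero_append_iff solves_zero_iff[OF h1 \<open>S' \<subseteq> V\<close>] solves_zero_iff[OF h2 \<open>S' \<subseteq> V\<close>]
        by (cases "g1 S'"; cases "g2 S'") auto
    qed
    have "\<not> (g1 S = hang \<and> g2 S = hang)"
    proof
      assume "g1 S = hang \<and> g2 S = hang"
      then obtain S' where "S \<subseteq> S'" "S' \<subseteq> V" "g1 S' \<noteq> g2 S'"
        using sep \<open>S \<subseteq> V\<close> unfolding hang_separated_def by auto
      then show False
        using agree by blast
    qed
    then show "g1 S = fall \<and> g2 S = fall"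
      using agree[of S] \<open>S \<subseteq> V\<close> by (cases "g1 S") auto
  next
    assume "g1 S = fall \<and> g2 S = fall"
    then show "fg_is_zero (fg_kill S (h1 @ h2))"
      using fg_is_zero_append solves_zero_iff[OF h1 that] solves_zero_iff[OF h2 that] by simp
  qed
  then show ?thesis
    using h1 h2 by (auto simp: solves_def fg_plus_def spec_and_def fg_word_on_def)
qed

lemma solves_spec_or:
  assumes h1: "solves V h1 g1" and h2: "solves V h2 g2" and sep: "hang_separated V g1 g2"
  shows "solves V (fg_comm h1 h2) (spec_or g1 g2)"
proof -
  have "fg_is_zero (fg_kill S (fg_comm h1 h2)) \<longleftrightarrow> g1 S = fall \<or> g2 S = fall" if "S \<subseteq> V" for S
  proof
    assume zero: "fg_is_zero (fg_kill S (fg_comm h1 h2))"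
    show "g1 S = fall \<or> g2 S = fall"
    proof (rule ccontr)
      assume "\<not> (g1 S = fall \<or> g2 S = fall)"
      then have hang: "g1 S = hang" "g2 S = hang"
        by simp_all
      have commute: "fg_kill S h1 @ fg_kill S h2 \<approx> fg_kill S h2 @ fg_kill S h1"
        using fg_commute_if_comm_zero zero by (simp add: fg_kill_comm)
      have nonzero: "\<not> fg_is_zero (fg_kill S h1)" "\<not> fg_is_zero (fg_kill S h2)"
        using hang solves_zero_iff[OF h1 \<open>S \<subseteq> V\<close>] solves_zero_iff[OF h2 \<open>S \<subseteq> V\<close>] by simp_all
      have agree: "g1 S' = g2 S'" if "S \<subseteq> S'" "S' \<subseteq> V" for S'
      proof -
        have "fg_is_zero (fg_kill S' (fg_kill S h1)) \<longleftrightarrow> fg_is_zero (fg_kill S' (fg_kill S h2))"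
          by (rule fg_commute_kill_zero_iff[OF commute nonzero])
        then show ?thesis
          using \<open>S \<subseteq> S'\<close> solves_zero_iff[OF h1 \<open>S' \<subseteq> V\<close>] solves_zero_iff[OF h2 \<open>S' \<subseteq> V\<close>]
          by (cases "g1 S'"; cases "g2 S'") (auto simp: fg_kill_kill Un_absorb1)
      qed
      obtain S' where "S \<subseteq> S'" "S' \<subseteq> V" "g1 S' \<noteq> g2 S'"
        using sep \<open>S \<subseteq> V\<close> hang unfolding hang_separated_def by auto
      then show False
        using agree by blast
    qed
  next
    assume "g1 S = fall \<or> g2 S = fall"
    then show "fg_is_zero (fg_kill S (fg_comm h1 h2))"
      using fg_is_zero_comm[of "fg_kill S h1" "fg_kill S h2"]
        solves_zero_iff[OF h1 that] solves_zero_iff[OF h2 that]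
      by (auto simp: fg_kill_comm)
  qed
  then show ?thesis
    using h1 h2 fg_word_on_neg[of V h1] fg_word_on_neg[of V h2]
    by (auto simp: solves_def fg_comm_def fg_plus_def spec_or_def fg_word_on_def)
qed

lemma hang_separated_disjoint_union:
  assumes "V1 \<inter> V2 = {}" "is_spec V1 f1"
  shows "hang_separated (V1 \<union> V2) (\<lambda>S. f1 (S \<inter> V1)) (\<lambda>S. f2 (S \<inter> V2))"
  unfolding hang_separated_def
proof (intro allI impI)
  fix S
  assume "S \<subseteq> V1 \<union> V2 \<and> f1 (S \<inter> V1) = hang \<and> f2 (S \<inter> V2) = hang"
  moreover have "(S \<union> V1) \<inter> V1 = V1" "(S \<union> V1) \<inter> V2 = S \<inter> V2"
    using assms(1) by auto
  moreover have "f1 V1 = fall"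
    using assms(2) by (simp add: is_spec_def)
  ultimately show "\<exists>S'. S \<subseteq> S' \<and> S' \<subseteq> V1 \<union> V2 \<and> f1 (S' \<inter> V1) \<noteq> f2 (S' \<inter> V2)"
    by (intro exI[of _ "S \<union> V1"]) auto
qed

theorem lemma2:
  fixes V :: "'a set"
  assumes "finite V"
  shows
  "(\<forall>g1 g2 h1 h2.
      is_spec V g1 \<and> is_spec V g2 \<and> solves V h1 g1 \<and> solves V h2 g2 \<and>
      (\<forall>S. S \<subseteq> V \<and> g1 S = hang \<and> g2 S = hang \<longrightarrow>
         (\<exists>S'. S \<subseteq> S' \<and> S' \<subseteq> V \<and> g1 S' \<noteq> g2 S'))
    \<longrightarrow> solves V (fg_plus h1 h2) (spec_and g1 g2) \<and>
        solves V (fg_comm h1 h2) (spec_or g1 g2))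
   \<and>
   (\<forall>V1 V2 f1 f2.
      V = V1 \<union> V2 \<and> V1 \<inter> V2 = {} \<and> is_spec V1 f1 \<and> is_spec V2 f2
    \<longrightarrow> (\<forall>S. S \<subseteq> V \<and> f1 (S \<inter> V1) = hang \<and> f2 (S \<inter> V2) = hang \<longrightarrow>
          (\<exists>S'. S \<subseteq> S' \<and> S' \<subseteq> V \<and> f1 (S' \<inter> V1) \<noteq> f2 (S' \<inter> V2))))"
proof (rule conjI; intro allI impI; (elim conjE)?)
  fix g1 g2 h1 h2
  assume h1: "solves V h1 g1" and h2: "solves V h2 g2"
    and sep: "\<forall>S. S \<subseteq> V \<and> g1 S = hang \<and> g2 S = hang \<longrightarrow>
      (\<exists>S'. S \<subseteq> S' \<and> S' \<subseteq> V \<and> g1 S' \<noteq> g2 S')"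
  from sep have "hang_separated V g1 g2"
    unfolding hang_separated_def .
  then show "solves V (fg_plus h1 h2) (spec_and g1 g2) \<and> solves V (fg_comm h1 h2) (spec_or g1 g2)"
    using solves_spec_and[OF h1 h2] solves_spec_or[OF h1 h2] by simp
next
  fix V1 V2 f1 f2 S
  assume "V = V1 \<union> V2" "V1 \<inter> V2 = {}" "is_spec V1 f1"
    and "S \<subseteq> V" "f1 (S \<inter> V1) = hang" "f2 (S \<inter> V2) = hang"
  moreover have "hang_separated V (\<lambda>S. f1 (S \<inter> V1)) (\<lambda>S. f2 (S \<inter> V2))"
    using calculation hang_separated_disjoint_union by simp
  ultimately show "\<exists>S'. S \<subseteq> S' \<and> S' \<subseteq> V \<and> f1 (S' \<inter> V1) \<noteq> f2 (S' \<inter> V2)"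
    unfolding hang_separated_def by auto
qed

end
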